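(* Every unweighted instance $(H,U,k)$ of the atomic two-stage facility location game (i.e. $w(v)=1$ for all $v\in V$; the feasibility sets $U(f)$ may be arbitrary) admits a subgame perfect equilibrium $(\mathbf{s},\sigma)$ in which the full client profile $\sigma$ is a full client equilibrium consisting of pure client profiles (i.e. $\sigma(\mathbf{s}')_{v,f}\in\{0,1\}$ for all FPPs $\mathbf{s}'$, clients $v$ and facilities $f$).
   Context: Atomic two-stage facility location game. An instance is a triple $(H,U,k)$: $H=(V,E,w)$ is a finite directed graph with vertex weights $w:V\to\mathbb{Q}_{>0}$; $F$ is a set of $k$ facility agents; $U:F\to 2^V$ assigns to each facility agent $f$ a set $U(f)\subseteq V$ of feasible locations. The vertices are simultaneously the clients and the possible locations. The instance is unweighted if $w(v)=1$ for all $v$. A facility placement profile (FPP) is a vector $\mathbf{s}=(s_f)_{f\in F}$ with $s_f\in U(f)$ (several facilities may choose the same vertex); $S$ denotes the set of all FPPs. For a client $v$ let $N(v)=\{v\}\cup\{u:(v,u)\in E\}$ and $N_{\mathbf{s}}(v)=\{f\in F: s_f\in N(v)\}$. A client profile for $\mathbf{s}$ is $\sigma(\mathbf{s})$, assigning to each client $v$ numbers $\sigma(\mathbf{s})_{v,f}\in[0,1]$ ($f\in F$) with $\sigma(\mathbf{s})_{v,f}=0$ for $f\notin N_{\mathbf{s}}(v)$ and $\sum_{f\in N_{\mathbf{s}}(v)}\sigma(\mathbf{s})_{v,f}=1$ whenever $N_{\mathbf{s}}(v)\neq\varnothing$ (a probability distribution over available facilities). A full client profile $\sigma$ specifies a client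 profile $\sigma(\mathbf{s}')$ for every $\mathbf{s}'\in S$. The load of facility $f$ is $\ell_f(\mathbf{s},\sigma)=\sum_{v\in V}\sigma(\mathbf{s})_{v,f}w(v)$. The cost of client $v$ is $L_v(\mathbf{s},\sigma)=w(v)+\sum_{f\in N_{\mathbf{s}}(v)}\sigma(\mathbf{s})_{v,f}\,\ell_{-v,f}(\mathbf{s},\sigma)$ where $\ell_{-v,f}(\mathbf{s},\sigma)=\sum_{u\neq v}\sigma(\mathbf{s})_{u,f}w(u)$. $\sigma(\mathbf{s})$ is a client equilibrium if no client $v$ can strictly decrease $L_v$ by unilaterally changing her own distribution to another feasible one; $\sigma$ is a full client equilibrium if $\sigma(\mathbf{s}')$ is a client equilibrium for every $\mathbf{s}'\in S$. A pair $(\mathbf{s},\sigma)$ is a subgame perfect equilibrium (SPE) if $\sigma$ is a full client equilibrium and there is no facility $f$ and location $s'_f\in U(f)$ with $\ell_f((s'_f,\mathbf{s}_{-f}),\sigma)>\ell_f(\mathbf{s},\sigma)$. *)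

theory Defs
  imports Complex_Main "HOL-Library.FuncSet"
begin

text \<open>Graph H = (V,E,w); facility agents F (k = card F); feasibility sets U. A (full) client profile gives,
  for each client v and facility f, the probability sigma s v f.\<close>

definition nbhd :: "('v \<times> 'v) set \<Rightarrow> 'v \<Rightarrow> 'v set" where
  "nbhd E v = {v} \<union> {u. (v, u) \<in> E}"

definition FPPs :: "'f set \<Rightarrow> ('f \<Rightarrow> 'v set) \<Rightarrow> ('f \<Rightarrow> 'v) set" where
  "FPPs F U = PiE F U"

definition avail :: "('v \<times> 'v) set \<Rightarrow> 'f set \<Rightarrow> ('f \<Rightarrow> 'v) \<Rightarrow> 'v \<Rightarrow> 'f set" where
  "avail E F s v = {f \<in> F. s f \<in> nbhd E v}"

definition feasible_dist ::
  "('v \<times> 'v) set \<Rightarrow> 'f set \<Rightarrow> ('f \<Rightarrow> 'v) \<Rightarrow> 'v \<Rightarrow> ('f \<Rightarrow> real) \<Rightarrow> bool" where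
  "feasible_dist E F s v d \<longleftrightarrow>
     (\<forall>f\<in>F. 0 \<le> d f \<and> d f \<le> 1) \<and>
     (\<forall>f\<in>F. f \<notin> avail E F s v \<longrightarrow> d f = 0) \<and>
     (avail E F s v \<noteq> {} \<longrightarrow> (\<Sum>f\<in>avail E F s v. d f) = 1)"

definition client_profile ::
  "'v set \<Rightarrow> ('v \<times> 'v) set \<Rightarrow> 'f set \<Rightarrow> ('f \<Rightarrow> 'v) \<Rightarrow> ('v \<Rightarrow> 'f \<Rightarrow> real) \<Rightarrow> bool" where
  "client_profile V E F s p \<longleftrightarrow> (\<forall>v\<in>V. feasible_dist E F s v (p v))"

definition load :: "'v set \<Rightarrow> ('v \<Rightarrow> real) \<Rightarrow> ('v \<Rightarrow> 'f \<Rightarrow> real) \<Rightarrow> 'f \<Rightarrow> real" where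
  "load V w p f = (\<Sum>v\<in>V. p v f * w v)"

definition load_minus :: "'v set \<Rightarrow> ('v \<Rightarrow> real) \<Rightarrow> ('v \<Rightarrow> 'f \<Rightarrow> real) \<Rightarrow> 'v \<Rightarrow> 'f \<Rightarrow> real" where
  "load_minus V w p v f = (\<Sum>u\<in>V - {v}. p u f * w u)"

definition client_cost ::
  "'v set \<Rightarrow> ('v \<times> 'v) set \<Rightarrow> 'f set \<Rightarrow> ('v \<Rightarrow> real) \<Rightarrow> ('f \<Rightarrow> 'v) \<Rightarrow> ('v \<Rightarrow> 'f \<Rightarrow> real) \<Rightarrow> 'v \<Rightarrow> real" where
  "client_cost V E F w s p v = w v + (\<Sum>f\<in>avail E F s v. p v f * load_minus V w p v f)"

definition client_eq ::
  "'v set \<Rightarrow> ('v \<times> 'v) set \<Rightarrow> 'f set \<Rightarrow> ('v \<Rightarrow> real) \<Rightarrow> ('f \<Rightarrow> 'v) \<Rightarrow> ('v \<Rightarrow> 'f \<Rightarrow> real) \<Rightarrow> bool" where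
  "client_eq V E F w s p \<longleftrightarrow> client_profile V E F s p \<and>
     (\<forall>v\<in>V. \<forall>d. feasible_dist E F s v d \<longrightarrow>
        client_cost V E F w s p v \<le> client_cost V E F w s (p(v := d)) v)"

definition full_client_eq ::
  "'v set \<Rightarrow> ('v \<times> 'v) set \<Rightarrow> 'f set \<Rightarrow> ('f \<Rightarrow> 'v set) \<Rightarrow> ('v \<Rightarrow> real)
   \<Rightarrow> (('f \<Rightarrow> 'v) \<Rightarrow> 'v \<Rightarrow> 'f \<Rightarrow> real) \<Rightarrow> bool" where
  "full_client_eq V E F U w \<sigma> \<longleftrightarrow> (\<forall>s'\<in>FPPs F U. client_eq V E F w s' (\<sigma> s'))"

definition is_SPE ::
  "'v set \<Rightarrow> ('v \<times> 'v) set \<Rightarrow> 'f set \<Rightarrow> ('f \<Rightarrow> 'v set) \<Rightarrow> ('v \<Rightarrow> real)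
   \<Rightarrow> ('f \<Rightarrow> 'v) \<Rightarrow> (('f \<Rightarrow> 'v) \<Rightarrow> 'v \<Rightarrow> 'f \<Rightarrow> real) \<Rightarrow> bool" where
  "is_SPE V E F U w s \<sigma> \<longleftrightarrow> s \<in> FPPs F U \<and> full_client_eq V E F U w \<sigma> \<and>
     (\<forall>f\<in>F. \<forall>x\<in>U f. \<not> (load V w (\<sigma> (s(f := x))) f > load V w (\<sigma> s) f))"

definition pure_full_profile ::
  "'v set \<Rightarrow> 'f set \<Rightarrow> ('f \<Rightarrow> 'v set) \<Rightarrow> (('f \<Rightarrow> 'v) \<Rightarrow> 'v \<Rightarrow> 'f \<Rightarrow> real) \<Rightarrow> bool" where
  "pure_full_profile V F U \<sigma> \<longleftrightarrow>
     (\<forall>s'\<in>FPPs F U. \<forall>v\<in>V. \<forall>f\<in>F. \<sigma> s' v f \<in> {0, 1})"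

end

theory Submission
  imports Defs "HOL-Library.List_Lexorder" "HOL-Combinatorics.Permutations"
begin

text \<open>Call a pure assignment of the covered clients balanced if no client's facility has two
  more clients than another facility available to her; in the unweighted game such an assignment
  is a pure client equilibrium. Balanced assignments arise by maximising lexicographically the
  vector of truncated load sums \<open>\<Sum>\<^sub>g min (load g) t\<close>, \<open>t = 0, 1, \<dots>\<close>, since moving a client
  from load \<open>l + 2\<close> to load \<open>l\<close> increases it. The facilities take a placement and assignment
  maximising this potential over all placements; after a deviation of \<open>f\<close> the clients pick, among
  potential-maximising assignments, one minimising the load of \<open>f\<close>. Were that load larger than
  before, every facility reachable from \<open>f\<close> by moving clients would carry at least as much, and
  combining the new assignment there with the old one elsewhere would beat the global maximum.\<close>

lemma ex_maximizer_finite_image: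
  fixes f :: "'a \<Rightarrow> 'b::linorder"
  assumes "finite (f ` A)" and "x \<in> A"
  shows "\<exists>y\<in>A. \<forall>z\<in>A. f z \<le> f y"
proof -
  have "Max (f ` A) \<in> f ` A" using assms by (intro Max_in) auto
  then obtain y where "y \<in> A" "f y = Max (f ` A)" by auto
  then show ?thesis using assms(1) by (metis Max_ge imageI)
qed

lemma map_upt_lex_less:
  fixes T1 T2 :: "nat \<Rightarrow> 'a::linorder"
  assumes "m < n" and "\<forall>j\<le>m. T1 j \<le> T2 j" and "T1 m < T2 m"
  shows "map T1 [0..<n] < map T2 [0..<n]"
proof -
  define t where "t = (LEAST j. T1 j \<noteq> T2 j)"
  have "T1 m \<noteq> T2 m" using assms(3) by simp
  then have diff: "T1 t \<noteq> T2 t" and "t \<le> m"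
    unfolding t_def by (fact LeastI, fact Least_le)
  have same: "\<forall>j<t. T1 j = T2 j" unfolding t_def using not_less_Least by blast
  have "T1 t < T2 t" using diff \<open>t \<le> m\<close> assms(2) by (simp add: order_less_le)
  moreover have "take t (map T1 [0..<n]) = take t (map T2 [0..<n])"
    using same \<open>t \<le> m\<close> assms(1) by (simp add: take_map)
  ultimately show ?thesis using \<open>t \<le> m\<close> assms(1)
    unfolding list_less_def lexord_take_index_conv by (intro disjI2 exI[of _ t]) auto
qed

definition truncated_sum :: "'a set \<Rightarrow> ('a \<Rightarrow> nat) \<Rightarrow> nat \<Rightarrow> nat" where
  "truncated_sum A L t = (\<Sum>a\<in>A. min (L a) t)"

lemma map_truncated_sum_less:
  assumes "finite A" and "m < n"
    and le: "\<forall>a\<in>A. min (L1 a) m \<le> min (L2 a) m" and less: "\<exists>a\<in>A. min (L1 a) m < min (L2 a) m"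
  shows "map (truncated_sum A L1) [0..<n] < map (truncated_sum A L2) [0..<n]"
proof (rule map_upt_lex_less[OF \<open>m < n\<close>])
  have "min (L1 a) j \<le> min (L2 a) j" if "a \<in> A" "j \<le> m" for a j
    using le[rule_format, OF that(1)] that(2) by linarith
  then show "\<forall>j\<le>m. truncated_sum A L1 j \<le> truncated_sum A L2 j"
    unfolding truncated_sum_def by (auto intro: sum_mono)
  show "truncated_sum A L1 m < truncated_sum A L2 m"
    unfolding truncated_sum_def using assms(1) le less by (rule sum_strict_mono_ex1)
qed

lemma truncated_sum_permute:
  "p permutes A \<Longrightarrow> truncated_sum A (L \<circ> p) = truncated_sum A L"
  unfolding truncated_sum_def by (auto simp: sum.permute[of p A "\<lambda>a. min (L a) _"] comp_def)

lemma relpowp_avoiding_target: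
  "(R ^^ k) a b \<Longrightarrow> ((\<lambda>x y. R x y \<and> x \<noteq> b) ^^ k) a b \<or> (\<exists>j<k. (R ^^ j) a b)"
proof (induction k arbitrary: a)
  case 0
  then show ?case by simp
next
  case (Suc k)
  from relpowp_Suc_D2[OF Suc.prems] obtain c where ac: "R a c" and cb: "(R ^^ k) c b" by blast
  show ?case
  proof (cases "a = b")
    case True
    then show ?thesis by (intro disjI2 exI[of _ 0]) auto
  next
    case False
    from Suc.IH[OF cb] show ?thesis
    proof
      assume "((\<lambda>x y. R x y \<and> x \<noteq> b) ^^ k) c b"
      then show ?thesis using ac False by (intro disjI1 relpowp_Suc_I2) auto
    next
      assume "\<exists>j<k. (R ^^ j) c b"
      then obtain j where "j < k" "(R ^^ j) c b" by blast
      with ac have "(R ^^ Suc j) a b" by (intro relpowp_Suc_I2)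
      then show ?thesis using \<open>j < k\<close> by (intro disjI2 exI[of _ "Suc j"]) auto
    qed
  qed
qed

locale unweighted_game =
  fixes V :: "'v set" and E :: "('v \<times> 'v) set" and F :: "'f set"
  assumes finite_V: "finite V" and finite_F: "finite F"
begin

definition covered :: "('f \<Rightarrow> 'v) \<Rightarrow> 'v \<Rightarrow> bool" where
  "covered s v \<longleftrightarrow> avail E F s v \<noteq> {}"

text \<open>A pure client profile is encoded by a choice function \<open>a\<close>; its values at uncovered
  clients are junk and are ignored by \<open>pure_load\<close> and \<open>pure_profile\<close>.\<close>

definition assignment :: "('f \<Rightarrow> 'v) \<Rightarrow> ('v \<Rightarrow> 'f) \<Rightarrow> bool" where
  "assignment s a \<longleftrightarrow> (\<forall>v\<in>V. covered s v \<longrightarrow> a v \<in> avail E F s v)"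

definition pure_load :: "('f \<Rightarrow> 'v) \<Rightarrow> ('v \<Rightarrow> 'f) \<Rightarrow> 'f \<Rightarrow> nat" where
  "pure_load s a g = card {v\<in>V. covered s v \<and> a v = g}"

definition pure_profile :: "('f \<Rightarrow> 'v) \<Rightarrow> ('v \<Rightarrow> 'f) \<Rightarrow> 'v \<Rightarrow> 'f \<Rightarrow> real" where
  "pure_profile s a v g = (if covered s v \<and> a v = g then 1 else 0)"

definition balanced :: "('f \<Rightarrow> 'v) \<Rightarrow> ('v \<Rightarrow> 'f) \<Rightarrow> bool" where
  "balanced s a \<longleftrightarrow> assignment s a \<and>
     (\<forall>v\<in>V. covered s v \<longrightarrow> (\<forall>h\<in>avail E F s v. pure_load s a (a v) \<le> pure_load s a h + 1))"

definition potential :: "('f \<Rightarrow> 'v) \<Rightarrow> ('v \<Rightarrow> 'f) \<Rightarrow> nat list" where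
  "potential s a = map (truncated_sum F (pure_load s a)) [0..<Suc (card V)]"

definition optimal :: "('f \<Rightarrow> 'v) \<Rightarrow> ('v \<Rightarrow> 'f) set" where
  "optimal s = {a. assignment s a \<and> (\<forall>b. assignment s b \<longrightarrow> potential s b \<le> potential s a)}"

definition shift_edge :: "('f \<Rightarrow> 'v) \<Rightarrow> ('v \<Rightarrow> 'f) \<Rightarrow> 'f \<Rightarrow> 'f \<Rightarrow> bool" where
  "shift_edge s a g h \<longleftrightarrow> (\<exists>v\<in>V. covered s v \<and> a v = g \<and> h \<in> avail E F s v)"

lemma avail_subset: "avail E F s v \<subseteq> F"
  unfolding avail_def by auto

lemma finite_avail: "finite (avail E F s v)"
  using finite_F avail_subset by (rule finite_subset[rotated])

lemma avail_fun_upd_other: "g \<noteq> f \<Longrightarrow> g \<in> avail E F (s(f := x)) v \<longleftrightarrow> g \<in> avail E F s v"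
  unfolding avail_def by auto

lemma assignment_in_F: "assignment s a \<Longrightarrow> v \<in> V \<Longrightarrow> covered s v \<Longrightarrow> a v \<in> F"
  unfolding assignment_def using avail_subset by blast

lemma assignment_exists: "\<exists>a. assignment s a"
  by (rule exI[of _ "\<lambda>v. SOME g. g \<in> avail E F s v"])
     (auto simp: assignment_def covered_def intro: someI_ex)

lemma pure_load_le: "pure_load s a g \<le> card V"
  unfolding pure_load_def using finite_V by (intro card_mono) auto

lemma pure_load_shift:
  assumes "v \<in> V" and "covered s v" and "h \<noteq> a v"
  shows "pure_load s (a(v := h)) =
    (pure_load s a)(a v := pure_load s a (a v) - 1, h := Suc (pure_load s a h))"
proof
  fix g
  let ?S = "\<lambda>b g. {u\<in>V. covered s u \<and> b u = g}"
  have fin: "finite (?S b g)" for b g using finite_V by auto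
  consider "g = h" | "g = a v" | "g \<noteq> h" "g \<noteq> a v" by blast
  then show "pure_load s (a(v := h)) g =
    ((pure_load s a)(a v := pure_load s a (a v) - 1, h := Suc (pure_load s a h))) g"
  proof cases
    case 1
    then have "?S (a(v := h)) g = insert v (?S a g)" and "v \<notin> ?S a g" using assms by auto
    then show ?thesis using 1 card_insert_disjoint[OF fin] unfolding pure_load_def by simp
  next
    case 2
    then have "?S (a(v := h)) g = ?S a g - {v}" and "v \<in> ?S a g" using assms by auto
    then show ?thesis using 2 assms(3) fin unfolding pure_load_def by simp
  next
    case 3
    then have "?S (a(v := h)) g = ?S a g" by auto
    then show ?thesis using 3 unfolding pure_load_def by simp
  qed
qed

lemma potential_shift_less:
  assumes "assignment s a" "v \<in> V" "covered s v" "h \<in> avail E F s v"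
    and "pure_load s a h + 2 \<le> pure_load s a (a v)"
  shows "potential s a < potential s (a(v := h))"
  unfolding potential_def
proof (rule map_truncated_sum_less[OF finite_F, where m = "Suc (pure_load s a h)"])
  have "h \<noteq> a v" using assms(5) by auto
  note shift = pure_load_shift[where a = a, OF assms(2,3) this]
  show "Suc (pure_load s a h) < Suc (card V)"
    using pure_load_le[of s a "a v"] assms(5) by linarith
  show "\<forall>g\<in>F. min (pure_load s a g) (Suc (pure_load s a h))
      \<le> min (pure_load s (a(v := h)) g) (Suc (pure_load s a h))"
    using assms(5) by (auto simp: shift)
  show "\<exists>g\<in>F. min (pure_load s a g) (Suc (pure_load s a h))
      < min (pure_load s (a(v := h)) g) (Suc (pure_load s a h))"
    using assms(4) avail_subset by (intro bexI[of _ h]) (auto simp: shift)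
qed

lemma potential_shift_eq:
  assumes "assignment s a" "v \<in> V" "covered s v" "h \<in> avail E F s v"
    and "pure_load s a (a v) = Suc (pure_load s a h)"
  shows "potential s (a(v := h)) = potential s a"
proof -
  have "h \<noteq> a v" using assms(5) by auto
  then have "pure_load s (a(v := h)) = pure_load s a \<circ> transpose (a v) h"
    using assms(5) by (auto simp: pure_load_shift[where a = a, OF assms(2,3)] transpose_def)
  moreover have "transpose (a v) h permutes F"
    using assms avail_subset assignment_in_F by (intro permutes_swap_id) auto
  ultimately show ?thesis unfolding potential_def by (simp add: truncated_sum_permute)
qed

lemma optimal_balanced: "a \<in> optimal s \<Longrightarrow> balanced s a"
  unfolding balanced_def
proof (intro conjI ballI impI)
  assume opt: "a \<in> optimal s"
  then show "assignment s a" unfolding optimal_def by simp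
  fix v h assume "v \<in> V" "covered s v" "h \<in> avail E F s v"
  then have "assignment s (a(v := h))" and
    "\<not> potential s a < potential s (a(v := h))"
    using opt unfolding optimal_def assignment_def by (auto simp: not_less)
  then show "pure_load s a (a v) \<le> pure_load s a h + 1"
    using potential_shift_less \<open>assignment s a\<close> \<open>v \<in> V\<close> \<open>covered s v\<close> \<open>h \<in> avail E F s v\<close>
    by fastforce
qed

lemma finite_potentials: "finite (range (\<lambda>(s, a). potential s a))"
proof -
  let ?Lists = "{xs. set xs \<subseteq> {..card F * card V} \<and> length xs = Suc (card V)}"
  have "potential s a \<in> ?Lists" for s a
  proof -
    have "truncated_sum F (pure_load s a) t \<le> card F * card V" for t
      using sum_mono[of F "\<lambda>g. min (pure_load s a g) t" "\<lambda>_. card V"] pure_load_le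
      unfolding truncated_sum_def by (simp add: min.coboundedI1)
    then show ?thesis unfolding potential_def by auto
  qed
  then have "range (\<lambda>(s, a). potential s a) \<subseteq> ?Lists" by auto
  then show ?thesis by (rule finite_subset) (rule finite_lists_length_eq, simp)
qed

lemma exists_global_maximizer:
  assumes "S \<noteq> {}"
  obtains s0 a0 where "s0 \<in> S" and "assignment s0 a0"
    and "\<And>s b. s \<in> S \<Longrightarrow> assignment s b \<Longrightarrow> potential s b \<le> potential s0 a0"
proof -
  let ?A = "{(s, a). s \<in> S \<and> assignment s a}"
  obtain s a where "s \<in> S" "assignment s a" using assms assignment_exists by blast
  moreover have "finite ((\<lambda>(s, a). potential s a) ` ?A)"
    using finite_potentials by (rule finite_subset[rotated]) auto
  ultimately obtain y where "y \<in> ?A" "\<forall>z\<in>?A. (\<lambda>(s, a). potential s a) z \<le> (\<lambda>(s, a). potential s a) y"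
    using ex_maximizer_finite_image[of "\<lambda>(s, a). potential s a" ?A "(s, a)"] by blast
  moreover obtain s0 a0 where "y = (s0, a0)" by (cases y)
  ultimately show thesis by (intro that[of s0 a0]) auto
qed

lemma optimal_nonempty: "optimal s \<noteq> {}"
proof -
  obtain s0 a where "s0 \<in> {s}" "assignment s0 a"
    and "\<And>s' b. s' \<in> {s} \<Longrightarrow> assignment s' b \<Longrightarrow> potential s' b \<le> potential s0 a"
    by (rule exists_global_maximizer[of "{s}"]) auto
  then show ?thesis unfolding optimal_def by auto
qed

lemma sum_pure_profile:
  "finite W \<Longrightarrow> (\<Sum>u\<in>W. pure_profile s a u g) = card {u\<in>W. covered s u \<and> a u = g}"
  unfolding pure_profile_def by (simp add: sum.If_cases Int_def)

lemma load_pure_profile: "load V (\<lambda>_. 1) (pure_profile s a) g = pure_load s a g"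
  unfolding load_def pure_load_def using sum_pure_profile[OF finite_V] by simp

lemma load_minus_pure_profile_upd:
  assumes "v \<in> V"
  shows "load_minus V (\<lambda>_. 1) ((pure_profile s a)(v := d)) v g
    = pure_load s a g - pure_profile s a v g"
proof -
  have "load_minus V (\<lambda>_. 1) ((pure_profile s a)(v := d)) v g = (\<Sum>u\<in>V - {v}. pure_profile s a u g)"
    unfolding load_minus_def by (intro sum.cong) auto
  also have "\<dots> = pure_load s a g - pure_profile s a v g"
    using finite_V assms sum_pure_profile[OF finite_V] by (simp add: sum_diff1 pure_load_def)
  finally show ?thesis .
qed

lemma client_cost_pure_profile_upd:
  "v \<in> V \<Longrightarrow> client_cost V E F (\<lambda>_. 1) s ((pure_profile s a)(v := d)) v
    = 1 + (\<Sum>g\<in>avail E F s v. d g * (pure_load s a g - pure_profile s a v g))"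
  unfolding client_cost_def by (simp add: load_minus_pure_profile_upd)

lemma feasible_dist_pure_profile:
  assumes "assignment s a" "v \<in> V"
  shows "feasible_dist E F s v (pure_profile s a v)"
  unfolding feasible_dist_def
proof (intro conjI ballI impI)
  fix g assume "g \<in> F" "g \<notin> avail E F s v"
  then show "pure_profile s a v g = 0" using assms unfolding pure_profile_def assignment_def by auto
next
  assume "avail E F s v \<noteq> {}"
  then have "covered s v" "a v \<in> avail E F s v" using assms unfolding assignment_def covered_def by auto
  then show "(\<Sum>g\<in>avail E F s v. pure_profile s a v g) = 1"
    unfolding pure_profile_def using finite_avail by (simp add: sum.delta)
qed (auto simp: pure_profile_def)

text \<open>A client pays the load of her facility, herself included, while switching to \<open>h\<close> would
  cost \<open>load h + 1\<close>.\<close>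

lemma balanced_client_eq:
  assumes "balanced s a"
  shows "client_eq V E F (\<lambda>_. 1) s (pure_profile s a)"
  unfolding client_eq_def client_profile_def
proof (intro conjI ballI allI impI)
  have asg: "assignment s a" using assms unfolding balanced_def by simp
  then show "feasible_dist E F s v (pure_profile s a v)" if "v \<in> V" for v
    using that by (rule feasible_dist_pure_profile)
  fix v d assume v: "v \<in> V" and d: "feasible_dist E F s v d"
  show "client_cost V E F (\<lambda>_. 1) s (pure_profile s a) v
    \<le> client_cost V E F (\<lambda>_. 1) s ((pure_profile s a)(v := d)) v"
  proof (cases "covered s v")
    case False
    then show ?thesis unfolding client_cost_def covered_def by simp
  next
    case True
    let ?c = "\<lambda>g. real (pure_load s a g) - pure_profile s a v g"
    have av: "a v \<in> avail E F s v" using asg True v unfolding assignment_def by auto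
    have "client_cost V E F (\<lambda>_. 1) s (pure_profile s a) v = 1 + ?c (a v)"
      using client_cost_pure_profile_upd[OF v, of s a "pure_profile s a v"] av finite_avail True
      by (simp add: pure_profile_def if_distrib sum.delta cong: if_cong)
    also have "\<dots> = 1 + (\<Sum>g\<in>avail E F s v. d g * ?c (a v))"
      using d True unfolding feasible_dist_def covered_def by (simp add: sum_distrib_right[symmetric])
    also have "\<dots> \<le> 1 + (\<Sum>g\<in>avail E F s v. d g * ?c g)"
    proof -
      have "?c (a v) \<le> ?c g" if "g \<in> avail E F s v" for g
      proof -
        have "pure_load s a (a v) \<le> pure_load s a g + 1"
          using assms True v that unfolding balanced_def by blast
        then show ?thesis using True by (simp add: pure_profile_def)
      qed
      moreover have "0 \<le> d g" if "g \<in> avail E F s v" for g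
        using d that avail_subset unfolding feasible_dist_def by blast
      ultimately show ?thesis by (simp add: sum_mono mult_left_mono)
    qed
    also have "\<dots> = client_cost V E F (\<lambda>_. 1) s ((pure_profile s a)(v := d)) v"
      using client_cost_pure_profile_upd[OF v] by simp
    finally show ?thesis .
  qed
qed

lemma optimal_shift:
  assumes "q \<in> optimal s" "v \<in> V" "covered s v" "h \<in> avail E F s v"
    and "pure_load s q (q v) = Suc (pure_load s q h)"
  shows "q(v := h) \<in> optimal s"
proof -
  have "assignment s q" using assms(1) unfolding optimal_def by simp
  then have "potential s (q(v := h)) = potential s q" and "assignment s (q(v := h))"
    using potential_shift_eq assms(2-5) unfolding assignment_def by auto
  then show ?thesis using assms(1) unfolding optimal_def by simp
qed

text \<open>Among optimal assignments choose one with least load \<open>m\<close> on \<open>f\<close>. If some facility reachable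
  from \<open>f\<close> had load below \<open>m\<close>, shifting one client along the last edge of a shortest such path
  would keep the assignment optimal and produce a shorter path, or lower the load of \<open>f\<close>.\<close>

lemma optimal_shift_path_load_ge:
  assumes min: "\<forall>b\<in>optimal s. m \<le> pure_load s b f"
  shows "q \<in> optimal s \<Longrightarrow> pure_load s q f = m \<Longrightarrow> (shift_edge s q ^^ n) f g \<Longrightarrow> m \<le> pure_load s q g"
proof (induction n arbitrary: q g rule: less_induct)
  case (less n)
  show ?case
  proof (cases n)
    case 0
    then show ?thesis using less.prems by (auto elim: relpowp_0_E)
  next
    case (Suc k)
    from less.prems(3) obtain g' where path: "(shift_edge s q ^^ k) f g'" and edge: "shift_edge s q g' g"
      unfolding Suc by (auto elim: relpowp_Suc_E)
    have load_g': "m \<le> pure_load s q g'" using less.IH[of k q g'] Suc less.prems(1,2) path by auto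
    show ?thesis
    proof (rule ccontr)
      assume low: "\<not> m \<le> pure_load s q g"
      from edge obtain v where v: "v \<in> V" "covered s v" "q v = g'" "g \<in> avail E F s v"
        unfolding shift_edge_def by auto
      have "pure_load s q g' \<le> pure_load s q g + 1"
        using optimal_balanced[OF less.prems(1)] v unfolding balanced_def by auto
      then have step: "pure_load s q g' = Suc (pure_load s q g)" using low load_g' by linarith
      define q' where "q' = q(v := g)"
      have opt': "q' \<in> optimal s"
        unfolding q'_def using optimal_shift[OF less.prems(1) v(1,2,4)] v(3) step by simp
      have "g \<noteq> g'" using step by (metis n_not_Suc_n)
      then have load': "pure_load s q' = (pure_load s q)(g' := pure_load s q g, g := pure_load s q g')"
        using pure_load_shift[where a = q, OF v(1,2)] v(3) step unfolding q'_def by simp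
      have "g' \<noteq> f"
      proof
        assume "g' = f"
        then have "pure_load s q' f < m" using load' step less.prems(2) \<open>g \<noteq> g'\<close> by simp
        moreover have "m \<le> pure_load s q' f" using min opt' by blast
        ultimately show False by simp
      qed
      moreover have "g \<noteq> f" using low less.prems(2) by auto
      ultimately have f_load': "pure_load s q' f = m" using load' less.prems(2) by simp
      from relpowp_avoiding_target[OF path] show False
      proof
        assume "((\<lambda>x y. shift_edge s q x y \<and> x \<noteq> g') ^^ k) f g'"
        then have "(shift_edge s q' ^^ k) f g'"
          by (rule relpowp_mono[rotated]) (auto simp: shift_edge_def q'_def v(3))
        then have "m \<le> pure_load s q' g'" using less.IH[of k q' g'] Suc opt' f_load' by simp
        then show False using load' low \<open>g \<noteq> g'\<close> by simp
      next
        assume "\<exists>j<k. (shift_edge s q ^^ j) f g'"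
        then obtain j where "j < k" "(shift_edge s q ^^ j) f g'" by blast
        then have "(shift_edge s q ^^ Suc j) f g" using edge by (intro relpowp_Suc_I)
        then show False using less.IH[of "Suc j" q g] Suc \<open>j < k\<close> less.prems(1,2) low by simp
      qed
    qed
  qed
qed

text \<open>As \<open>R\<close> is closed under shift edges, \<open>q\<close> sends no client of an \<open>a0\<close>-facility outside \<open>R\<close>
  into \<open>R\<close>, so such clients can all return to their \<open>a0\<close>-facility.\<close>

lemma recombined_assignment:
  assumes q: "assignment (s0(f := x)) q" and a0: "assignment s0 a0"
    and closed: "\<And>g h. R g \<Longrightarrow> shift_edge (s0(f := x)) q g h \<Longrightarrow> R h" and "R f"
  obtains p where "assignment (s0(f := x)) p"
    and "\<And>g. R g \<Longrightarrow> pure_load (s0(f := x)) q g \<le> pure_load (s0(f := x)) p g"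
    and "\<And>g. \<not> R g \<Longrightarrow> pure_load s0 a0 g \<le> pure_load (s0(f := x)) p g"
proof
  let ?s = "s0(f := x)"
  define p where "p v = (if R (q v) then q v else if covered s0 v \<and> a0 v \<noteq> f then a0 v else q v)" for v
  show "assignment ?s p" unfolding assignment_def
  proof (intro ballI impI)
    fix v assume v: "v \<in> V" "covered ?s v"
    have "a0 v \<in> avail E F ?s v" if "covered s0 v" "a0 v \<noteq> f"
      using a0 v(1) that avail_fun_upd_other unfolding assignment_def by blast
    then show "p v \<in> avail E F ?s v" using q v unfolding p_def assignment_def by auto
  qed
  show "pure_load ?s q g \<le> pure_load ?s p g" if "R g" for g
    unfolding pure_load_def using finite_V that by (intro card_mono) (auto simp: p_def)
  show "pure_load s0 a0 g \<le> pure_load ?s p g" if "\<not> R g" for g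
  proof -
    have "v \<in> V \<and> covered ?s v \<and> p v = g" if v: "v \<in> V" "covered s0 v" "a0 v = g" for v
    proof -
      have "g \<noteq> f" using \<open>\<not> R g\<close> \<open>R f\<close> by auto
      moreover have "g \<in> avail E F s0 v" using a0 v unfolding assignment_def by auto
      ultimately have "g \<in> avail E F ?s v" by (simp add: avail_fun_upd_other)
      then have "covered ?s v" and "\<not> R (q v)"
        using closed[of "q v" g] v(1) \<open>\<not> R g\<close> unfolding covered_def shift_edge_def by auto
      then show ?thesis using v \<open>\<not> R g\<close> \<open>R f\<close> unfolding p_def by auto
    qed
    then show ?thesis unfolding pure_load_def using finite_V by (intro card_mono) auto
  qed
qed

lemma deviation_load_le:
  assumes max: "\<forall>b. assignment (s0(f := x)) b \<longrightarrow> potential (s0(f := x)) b \<le> potential s0 a0"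
    and a0: "assignment s0 a0" and "f \<in> F"
    and q: "q \<in> optimal (s0(f := x))"
    and q_min: "\<forall>b\<in>optimal (s0(f := x)). pure_load (s0(f := x)) q f \<le> pure_load (s0(f := x)) b f"
  shows "pure_load (s0(f := x)) q f \<le> pure_load s0 a0 f"
proof (rule ccontr)
  let ?s = "s0(f := x)"
  let ?R = "(shift_edge ?s q)\<^sup>*\<^sup>* f"
  define m where "m = pure_load ?s q f"
  assume "\<not> pure_load ?s q f \<le> pure_load s0 a0 f"
  then have less: "pure_load s0 a0 f < m" by (simp add: m_def)
  have min: "\<forall>b\<in>optimal ?s. m \<le> pure_load ?s b f" using q_min unfolding m_def .
  have R_load: "m \<le> pure_load ?s q g" if reach: "?R g" for g
  proof -
    obtain n where "(shift_edge ?s q ^^ n) f g" using rtranclp_imp_relpowp[OF reach] by blast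
    then show ?thesis by (rule optimal_shift_path_load_ge[OF min q m_def[symmetric]])
  qed
  have "assignment ?s q" using q unfolding optimal_def by simp
  moreover have "\<And>g h. ?R g \<Longrightarrow> shift_edge ?s q g h \<Longrightarrow> ?R h"
    by (rule rtranclp.rtrancl_into_rtrancl)
  ultimately obtain p where p: "assignment ?s p"
    and p_R: "\<And>g. ?R g \<Longrightarrow> pure_load ?s q g \<le> pure_load ?s p g"
    and p_not_R: "\<And>g. \<not> ?R g \<Longrightarrow> pure_load s0 a0 g \<le> pure_load ?s p g"
    using recombined_assignment[where R = ?R, OF _ a0] by blast
  have "potential s0 a0 < potential ?s p"
    unfolding potential_def
  proof (rule map_truncated_sum_less[OF finite_F, where m = m])
    show "m < Suc (card V)" using pure_load_le[of ?s q f] m_def by simp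
    have p_load: "m \<le> pure_load ?s p g" if "?R g" for g using R_load[OF that] p_R[OF that] by simp
    have "min (pure_load s0 a0 g) m \<le> min (pure_load ?s p g) m" for g
      using p_load[of g] p_not_R[of g] by (cases "?R g") auto
    then show "\<forall>g\<in>F. min (pure_load s0 a0 g) m \<le> min (pure_load ?s p g) m" by blast
    show "\<exists>g\<in>F. min (pure_load s0 a0 g) m < min (pure_load ?s p g) m"
      using \<open>f \<in> F\<close> less p_load[of f] by (intro bexI[of _ f]) auto
  qed
  moreover have "potential ?s p \<le> potential s0 a0" using max p by blast
  ultimately show False by simp
qed

text \<open>At \<open>s0(f := x)\<close> with \<open>x \<noteq> s0 f\<close> the only facility away from its place in \<open>s0\<close> is \<open>f\<close>, so
  minimising the total load of all such facilities minimises the load of the deviator.\<close>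

lemma exists_optimal_response:
  assumes "a0 \<in> optimal s0"
  obtains q where "q s0 = a0" and "\<And>s. q s \<in> optimal s"
    and "\<And>f x b. f \<in> F \<Longrightarrow> x \<noteq> s0 f \<Longrightarrow> b \<in> optimal (s0(f := x)) \<Longrightarrow>
      pure_load (s0(f := x)) (q (s0(f := x))) f \<le> pure_load (s0(f := x)) b f"
proof -
  define moved_load where "moved_load s a = (\<Sum>g\<in>{g\<in>F. s g \<noteq> s0 g}. pure_load s a g)" for s a
  have "\<exists>q. q \<in> optimal s \<and> (\<forall>b. b \<in> optimal s \<longrightarrow> moved_load s q \<le> moved_load s b)" for s
  proof -
    obtain a where "a \<in> optimal s" using optimal_nonempty by blast
    then show ?thesis by (rule ex_has_least_nat[where P = "\<lambda>a. a \<in> optimal s" and m = "moved_load s"])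
  qed
  then obtain q where q: "\<forall>s. q s \<in> optimal s \<and> (\<forall>b. b \<in> optimal s \<longrightarrow> moved_load s (q s) \<le> moved_load s b)"
    using choice[of "\<lambda>s q. q \<in> optimal s \<and> (\<forall>b. b \<in> optimal s \<longrightarrow> moved_load s q \<le> moved_load s b)"]
    by blast
  show thesis
  proof (rule that[of "q(s0 := a0)"])
    show "(q(s0 := a0)) s \<in> optimal s" for s using q assms by simp
    fix f x b assume "f \<in> F" "x \<noteq> s0 f" "b \<in> optimal (s0(f := x))"
    then have "moved_load (s0(f := x)) (q (s0(f := x))) \<le> moved_load (s0(f := x)) b" using q by blast
    moreover have "moved_load (s0(f := x)) = (\<lambda>a. pure_load (s0(f := x)) a f)"
      using \<open>f \<in> F\<close> \<open>x \<noteq> s0 f\<close> unfolding moved_load_def by (intro ext) (auto simp: conj_commute)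
    moreover have "s0(f := x) \<noteq> s0" using \<open>x \<noteq> s0 f\<close> by (metis fun_upd_same)
    ultimately show "pure_load (s0(f := x)) ((q(s0 := a0)) (s0(f := x))) f \<le> pure_load (s0(f := x)) b f"
      by simp
  qed simp
qed

end

theorem mainTheorem1:
  fixes V :: "'v set" and E :: "('v \<times> 'v) set" and F :: "'f set" and U :: "'f \<Rightarrow> 'v set"
  assumes "finite V" and "E \<subseteq> V \<times> V" and "finite F"
    and "\<forall>f\<in>F. U f \<noteq> {} \<and> U f \<subseteq> V"
  shows "\<exists>s \<sigma>. is_SPE V E F U (\<lambda>_. 1) s \<sigma> \<and> pure_full_profile V F U \<sigma>"
proof -
  interpret unweighted_game V E F using assms(1,3) by unfold_locales
  have "FPPs F U \<noteq> {}" using assms(4) unfolding FPPs_def by (simp add: PiE_eq_empty_iff)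
  then obtain s0 a0 where s0: "s0 \<in> FPPs F U" and a0: "assignment s0 a0"
    and max: "\<And>s b. s \<in> FPPs F U \<Longrightarrow> assignment s b \<Longrightarrow> potential s b \<le> potential s0 a0"
    using exists_global_maximizer by metis
  then have "a0 \<in> optimal s0" unfolding optimal_def by blast
  then obtain q where q0: "q s0 = a0" and q: "\<And>s. q s \<in> optimal s"
    and q_min: "\<And>f x b. f \<in> F \<Longrightarrow> x \<noteq> s0 f \<Longrightarrow> b \<in> optimal (s0(f := x)) \<Longrightarrow>
      pure_load (s0(f := x)) (q (s0(f := x))) f \<le> pure_load (s0(f := x)) b f"
    using exists_optimal_response by metis
  define \<sigma> where "\<sigma> s = pure_profile s (q s)" for s
  have "pure_load (s0(f := x)) (q (s0(f := x))) f \<le> pure_load s0 a0 f" if "f \<in> F" "x \<in> U f" for f x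
  proof (cases "x = s0 f")
    case False
    have "s0(f := x) \<in> FPPs F U" using s0 that unfolding FPPs_def by (metis PiE_fun_upd insert_absorb)
    then show ?thesis using deviation_load_le[OF _ a0 \<open>f \<in> F\<close> q] max q_min[OF \<open>f \<in> F\<close> False] by blast
  qed (simp add: q0)
  then have "\<forall>f\<in>F. \<forall>x\<in>U f. \<not> load V (\<lambda>_. 1) (\<sigma> (s0(f := x))) f > load V (\<lambda>_. 1) (\<sigma> s0) f"
    by (simp add: \<sigma>_def load_pure_profile q0 not_less)
  moreover have "full_client_eq V E F U (\<lambda>_. 1) \<sigma>"
    unfolding full_client_eq_def \<sigma>_def using balanced_client_eq[OF optimal_balanced[OF q]] by simp
  moreover have "pure_full_profile V F U \<sigma>"
    unfolding pure_full_profile_def \<sigma>_def pure_profile_def by simp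
  ultimately show ?thesis unfolding is_SPE_def using s0 by blast
qed

end
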